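(* For every set $X$, $\mathrm{Aut}(\overline{\mathcal{PI}^{\ast}}_X)\cong\mathcal{S}_X$, the symmetric group on $X$.
   Context: Let $X'=\{x':x\in X\}$ be a disjoint copy of $X$. $\overline{\mathcal{PI}^{\ast}}_X$ is the set of partitions of $X\cup X'$ each of whose blocks is a singleton (point) or a generalised line (a set meeting both $X$ and $X'$), with product $\circ$: $\alpha\circ\beta$ has as generalised lines exactly the sets $A\cup D'$ such that $A\cup B'$ is a generalised line of $\alpha$ and $B\cup D'$ is a generalised line of $\beta$ (same $B\subseteq X$), all other elements being points. $\mathrm{Aut}$ denotes the automorphism group. *)

theory Defs
  imports "HOL-Algebra.Bij"
begin

text \<open>The ground set X \<union> X' is modelled as Inl ` X \<union> Inr ` X in the sum type;
  Inl x stands for x and Inr x for x'.\<close>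

definition ground :: "'a set \<Rightarrow> ('a + 'a) set" where
  "ground X = Inl ` X \<union> Inr ` X"

definition is_partition_of :: "'b set \<Rightarrow> 'b set set \<Rightarrow> bool" where
  "is_partition_of S P \<longleftrightarrow> (\<forall>B\<in>P. B \<noteq> {}) \<and> \<Union>P = S \<and>
     (\<forall>B\<in>P. \<forall>C\<in>P. B \<noteq> C \<longrightarrow> B \<inter> C = {})"

definition gen_line :: "('a + 'a) set \<Rightarrow> bool" where
  "gen_line B \<longleftrightarrow> B \<inter> range Inl \<noteq> {} \<and> B \<inter> range Inr \<noteq> {}"

definition PIstar :: "'a set \<Rightarrow> ('a + 'a) set set set" where
  "PIstar X = {P. is_partition_of (ground X) P \<and>
      (\<forall>B\<in>P. (\<exists>z. B = {z}) \<or> gen_line B)}"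

definition PI_lines_prod :: "('a + 'a) set set \<Rightarrow> ('a + 'a) set set \<Rightarrow> ('a + 'a) set set" where
  "PI_lines_prod \<alpha> \<beta> = {Inl ` A \<union> Inr ` D | A B D.
      Inl ` A \<union> Inr ` B \<in> \<alpha> \<and> gen_line (Inl ` A \<union> Inr ` B) \<and>
      Inl ` B \<union> Inr ` D \<in> \<beta> \<and> gen_line (Inl ` B \<union> Inr ` D)}"

definition PI_prod :: "'a set \<Rightarrow> ('a + 'a) set set \<Rightarrow> ('a + 'a) set set \<Rightarrow> ('a + 'a) set set" where
  "PI_prod X \<alpha> \<beta> = PI_lines_prod \<alpha> \<beta> \<union>
      {{z} | z. z \<in> ground X \<and> z \<notin> \<Union>(PI_lines_prod \<alpha> \<beta>)}"

definition PIstar_monoid :: "'a set \<Rightarrow> ('a + 'a) set set monoid" where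
  "PIstar_monoid X = \<lparr>carrier = PIstar X, mult = PI_prod X,
      one = {{Inl x, Inr x} | x. x \<in> X}\<rparr>"

end

theory Submission
  imports Defs
begin

text \<open>
  A partition in PIstar X is determined by its generalised lines, and a line A \<union> B' is
  recorded as the pair (A, B). The lines of a partition then form a partial bijection between
  disjoint families of nonempty subsets of X, and the product of partitions becomes relational
  composition of these sets of pairs.

  In this monoid the minimal idempotents are exactly the singletons {(A, A)}, so an automorphism
  \<psi> maps {(A, A)} to {(f A, f A)} for a permutation f of the nonempty subsets of X. Two such
  sets A and B are disjoint or equal iff some element N satisfies {(A, A)} N = {(A, A)} and
  {(B, B)} N = {(B, B)}; hence f preserves disjointness in both directions. Such an f preserves
  inclusion, therefore maps singletons to singletons, and is the image map of a permutation
  \<sigma> of X. Finally (A, B) \<in> L iff {(A, A)} L {(B, B)} is nonempty, which forces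
  \<psi> L to be the image of L under \<sigma>.
\<close>


section \<open>Permutations of the nonempty subsets of a set\<close>

lemma ball_surj_on_iff:
  assumes "f ` A = A"
  shows "(\<forall>x\<in>A. P x) \<longleftrightarrow> (\<forall>x\<in>A. P (f x))"
proof -
  have "(\<forall>x\<in>A. P x) \<longleftrightarrow> (\<forall>x\<in>f ` A. P x)" by (simp only: assms)
  also have "\<dots> \<longleftrightarrow> (\<forall>x\<in>A. P (f x))" by blast
  finally show ?thesis .
qed

lemma subset_iff_disjoint_subsets:
  assumes "A \<subseteq> X"
  shows "A \<subseteq> B \<longleftrightarrow> (\<forall>C \<in> Pow X - {{}}. C \<inter> B = {} \<longrightarrow> C \<inter> A = {})"
proof (intro iffI subsetI)
  fix x assume "\<forall>C \<in> Pow X - {{}}. C \<inter> B = {} \<longrightarrow> C \<inter> A = {}" and "x \<in> A"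
  moreover from assms \<open>x \<in> A\<close> have "{x} \<in> Pow X - {{}}" by auto
  ultimately show "x \<in> B" by blast
qed blast

lemma singleton_iff_minimal:
  assumes "A \<in> Pow X - {{}}"
  shows "(\<exists>x. A = {x}) \<longleftrightarrow> (\<forall>B \<in> Pow X - {{}}. B \<subseteq> A \<longrightarrow> B = A)"
proof
  assume "\<forall>B \<in> Pow X - {{}}. B \<subseteq> A \<longrightarrow> B = A"
  moreover obtain x where "x \<in> A" using assms by auto
  moreover from assms \<open>x \<in> A\<close> have "{x} \<in> Pow X - {{}}" by auto
  ultimately show "\<exists>x. A = {x}" by blast
qed auto

lemma subset_iff_if_disjoint_iff:
  assumes bij: "bij_betw f (Pow X - {{}}) (Pow X - {{}})"
    and disjoint_iff: "\<And>A B. A \<in> Pow X - {{}} \<Longrightarrow> B \<in> Pow X - {{}} \<Longrightarrow> f A \<inter> f B = {} \<longleftrightarrow> A \<inter> B = {}"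
    and A: "A \<in> Pow X - {{}}" and B: "B \<in> Pow X - {{}}"
  shows "f A \<subseteq> f B \<longleftrightarrow> A \<subseteq> B"
proof -
  let ?N = "Pow X - {{}}"
  have "f A \<subseteq> f B \<longleftrightarrow> (\<forall>C \<in> ?N. C \<inter> f B = {} \<longrightarrow> C \<inter> f A = {})"
    using bij_betw_apply[OF bij A] by (intro subset_iff_disjoint_subsets) simp
  also have "\<dots> \<longleftrightarrow> (\<forall>C \<in> ?N. f C \<inter> f B = {} \<longrightarrow> f C \<inter> f A = {})"
    using bij_betw_imp_surj_on[OF bij] by (rule ball_surj_on_iff)
  also have "\<dots> \<longleftrightarrow> (\<forall>C \<in> ?N. C \<inter> B = {} \<longrightarrow> C \<inter> A = {})"
    using disjoint_iff A B by simp
  also have "\<dots> \<longleftrightarrow> A \<subseteq> B"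
    using A by (intro subset_iff_disjoint_subsets[symmetric]) simp
  finally show ?thesis .
qed

lemma singleton_iff_if_subset_iff:
  assumes bij: "bij_betw f (Pow X - {{}}) (Pow X - {{}})"
    and subset_iff: "\<And>A B. A \<in> Pow X - {{}} \<Longrightarrow> B \<in> Pow X - {{}} \<Longrightarrow> f A \<subseteq> f B \<longleftrightarrow> A \<subseteq> B"
    and A: "A \<in> Pow X - {{}}"
  shows "(\<exists>y. f A = {y}) \<longleftrightarrow> (\<exists>x. A = {x})"
proof -
  let ?N = "Pow X - {{}}"
  have "(\<exists>y. f A = {y}) \<longleftrightarrow> (\<forall>B \<in> ?N. B \<subseteq> f A \<longrightarrow> B = f A)"
    using bij_betw_apply[OF bij A] by (rule singleton_iff_minimal)
  also have "\<dots> \<longleftrightarrow> (\<forall>B \<in> ?N. f B \<subseteq> f A \<longrightarrow> f B = f A)"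
    using bij_betw_imp_surj_on[OF bij] by (rule ball_surj_on_iff)
  also have "\<dots> \<longleftrightarrow> (\<forall>B \<in> ?N. B \<subseteq> A \<longrightarrow> B = A)"
    using subset_iff A by (simp add: inj_on_eq_iff[OF bij_betw_imp_inj_on[OF bij]])
  also have "\<dots> \<longleftrightarrow> (\<exists>x. A = {x})"
    using A by (rule singleton_iff_minimal[symmetric])
  finally show ?thesis .
qed

lemma singleton_preserving_bij_obtains_permutation:
  assumes bij: "bij_betw f (Pow X - {{}}) (Pow X - {{}})"
    and singleton_iff: "\<And>A. A \<in> Pow X - {{}} \<Longrightarrow> (\<exists>y. f A = {y}) \<longleftrightarrow> (\<exists>x. A = {x})"
  obtains \<sigma> where "\<sigma> \<in> Bij X" and "\<And>x. x \<in> X \<Longrightarrow> f {x} = {\<sigma> x}"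
proof -
  define \<sigma> where "\<sigma> = (\<lambda>x\<in>X. the_elem (f {x}))"
  have f_singleton: "f {x} = {\<sigma> x}" if "x \<in> X" for x
  proof -
    from that have "{x} \<in> Pow X - {{}}" by simp
    then obtain y where "f {x} = {y}" using singleton_iff[of "{x}"] by auto
    with that show ?thesis by (simp add: \<sigma>_def)
  qed
  have "bij_betw \<sigma> X X"
  proof (rule bij_betw_imageI)
    show "inj_on \<sigma> X"
    proof (rule inj_onI)
      fix x x' assume "x \<in> X" "x' \<in> X" "\<sigma> x = \<sigma> x'"
      then have "f {x} = f {x'}" using f_singleton by simp
      with \<open>x \<in> X\<close> \<open>x' \<in> X\<close> show "x = x'"
        using inj_on_eq_iff[OF bij_betw_imp_inj_on[OF bij]] by simp
    qed
    show "\<sigma> ` X = X"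
    proof (intro equalityI subsetI)
      fix y assume "y \<in> \<sigma> ` X"
      then obtain x where "x \<in> X" "y = \<sigma> x" by blast
      then show "y \<in> X"
        using bij_betw_apply[OF bij, of "{x}"] f_singleton[of x] by simp
    next
      fix y assume "y \<in> X"
      then have "{y} \<in> f ` (Pow X - {{}})"
        using bij_betw_imp_surj_on[OF bij] by simp
      then obtain B where B: "B \<in> Pow X - {{}}" "f B = {y}" by blast
      then obtain x where "B = {x}" using singleton_iff[OF B(1)] by auto
      with B f_singleton show "y \<in> \<sigma> ` X" by force
    qed
  qed
  then have "\<sigma> \<in> Bij X" by (simp add: Bij_def \<sigma>_def)
  then show thesis using f_singleton by (rule that)
qed

lemma subset_preserving_bij_is_image:
  assumes bij: "bij_betw f (Pow X - {{}}) (Pow X - {{}})"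
    and subset_iff: "\<And>A B. A \<in> Pow X - {{}} \<Longrightarrow> B \<in> Pow X - {{}} \<Longrightarrow> f A \<subseteq> f B \<longleftrightarrow> A \<subseteq> B"
  obtains \<sigma> where "\<sigma> \<in> Bij X" and "\<And>A. A \<in> Pow X - {{}} \<Longrightarrow> f A = \<sigma> ` A"
proof -
  have singleton_iff: "(\<exists>y. f A = {y}) \<longleftrightarrow> (\<exists>x. A = {x})" if "A \<in> Pow X - {{}}" for A
    using bij subset_iff that by (rule singleton_iff_if_subset_iff)
  obtain \<sigma> where \<sigma>: "\<sigma> \<in> Bij X" and f_singleton: "\<And>x. x \<in> X \<Longrightarrow> f {x} = {\<sigma> x}"
    using singleton_preserving_bij_obtains_permutation[OF bij singleton_iff] by blast
  have "f A = \<sigma> ` A" if A: "A \<in> Pow X - {{}}" for A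
  proof (intro equalityI subsetI)
    fix y assume y: "y \<in> f A"
    then have "y \<in> X" using bij_betw_apply[OF bij A] by blast
    moreover have "\<sigma> ` X = X"
      using \<sigma> by (simp add: Bij_def bij_betw_def)
    ultimately obtain x where x: "x \<in> X" "\<sigma> x = y"
      by (metis imageE)
    then have "f {x} \<subseteq> f A" using f_singleton y by simp
    with x A have "x \<in> A" using subset_iff[of "{x}" A] by simp
    with x show "y \<in> \<sigma> ` A" by blast
  next
    fix y assume "y \<in> \<sigma> ` A"
    then obtain x where x: "x \<in> A" "y = \<sigma> x" by blast
    with A have "f {x} \<subseteq> f A" using subset_iff[of "{x}" A] by auto
    with x A show "y \<in> f A" using f_singleton by auto
  qed
  with \<sigma> show thesis by (rule that)
qed

lemma Bij_image_nonempty_subsets: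
  assumes "\<sigma> \<in> Bij X"
  shows "(`) \<sigma> ` (Pow X - {{}}) = Pow X - {{}}"
proof -
  have Pow: "(`) \<sigma> ` Pow X = Pow X"
    using assms bij_betw_image_Pow[of \<sigma> X X] by (simp add: Bij_def bij_betw_def)
  show ?thesis
  proof (intro equalityI subsetI)
    fix C assume "C \<in> (`) \<sigma> ` (Pow X - {{}})"
    with Pow show "C \<in> Pow X - {{}}" by auto
  next
    fix C assume C: "C \<in> Pow X - {{}}"
    with Pow obtain A where "A \<in> Pow X" "C = \<sigma> ` A"
      by (metis DiffD1 imageE)
    with C show "C \<in> (`) \<sigma> ` (Pow X - {{}})" by auto
  qed
qed

section \<open>Partitions as sets of lines\<close>

definition line_of :: "'a set \<times> 'a set \<Rightarrow> ('a + 'a) set" where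
  "line_of = (\<lambda>(A, B). Inl ` A \<union> Inr ` B)"

definition lines_of :: "('a + 'a) set set \<Rightarrow> ('a set \<times> 'a set) set" where
  "lines_of P = {(A, B). line_of (A, B) \<in> P \<and> A \<noteq> {} \<and> B \<noteq> {}}"

definition partition_of :: "'a set \<Rightarrow> ('a set \<times> 'a set) set \<Rightarrow> ('a + 'a) set set" where
  "partition_of X L = line_of ` L \<union> {{z} | z. z \<in> ground X \<and> z \<notin> \<Union>(line_of ` L)}"

definition line_system :: "'a set \<Rightarrow> ('a set \<times> 'a set) set \<Rightarrow> bool" where
  "line_system X L \<longleftrightarrow> Field L \<subseteq> Pow X - {{}} \<and>
     (\<forall>A B C D. (A, B) \<in> L \<longrightarrow> (C, D) \<in> L \<longrightarrow> A \<inter> C \<noteq> {} \<or> B \<inter> D \<noteq> {} \<longrightarrow> A = C \<and> B = D)"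

lemma line_of_Pair: "line_of (A, B) = Inl ` A \<union> Inr ` B"
  by (simp add: line_of_def)

lemma line_of_vimage: "line_of (Inl -` Z, Inr -` Z) = Z"
  by (auto simp: line_of_Pair image_iff) (metis sum.exhaust_sel)

lemma line_of_inject [simp]: "line_of p = line_of q \<longleftrightarrow> p = q"
proof
  have "p = (Inl -` line_of p, Inr -` line_of p)" for p :: "'a set \<times> 'a set"
    by (cases p) (auto simp: line_of_Pair)
  then show "line_of p = line_of q \<Longrightarrow> p = q" by metis
qed simp

lemma gen_line_line_of [simp]: "gen_line (line_of (A, B)) \<longleftrightarrow> A \<noteq> {} \<and> B \<noteq> {}"
  by (auto simp: gen_line_def line_of_Pair)

lemma not_gen_line_singleton [simp]: "\<not> gen_line {z}"
  by (cases z) (auto simp: gen_line_def)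

lemma line_of_subset_ground [simp]: "line_of (A, B) \<subseteq> ground X \<longleftrightarrow> A \<subseteq> X \<and> B \<subseteq> X"
  by (auto simp: ground_def line_of_Pair)

lemma line_of_disjoint:
  "line_of (A, B) \<inter> line_of (C, D) = {} \<longleftrightarrow> A \<inter> C = {} \<and> B \<inter> D = {}"
  by (auto simp: line_of_Pair)

lemma line_systemD:
  assumes "line_system X L" and "(A, B) \<in> L"
  shows "A \<noteq> {}" "A \<subseteq> X" "B \<noteq> {}" "B \<subseteq> X"
proof -
  have "A \<in> Field L" "B \<in> Field L"
    using assms(2) by (auto simp: Field_def)
  then show "A \<noteq> {}" "A \<subseteq> X" "B \<noteq> {}" "B \<subseteq> X"
    using assms(1) by (auto simp: line_system_def)
qed

lemma line_system_eq:
  assumes "line_system X L" and "(A, B) \<in> L" and "(C, D) \<in> L" and "A \<inter> C \<noteq> {} \<or> B \<inter> D \<noteq> {}"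
  shows "A = C" "B = D"
  using assms unfolding line_system_def by blast+

lemma line_systemI:
  assumes "\<And>A B. (A, B) \<in> L \<Longrightarrow> A \<noteq> {} \<and> A \<subseteq> X \<and> B \<noteq> {} \<and> B \<subseteq> X"
    and "\<And>A B C D. (A, B) \<in> L \<Longrightarrow> (C, D) \<in> L \<Longrightarrow> A \<inter> C \<noteq> {} \<or> B \<inter> D \<noteq> {} \<Longrightarrow> A = C \<and> B = D"
  shows "line_system X L"
  using assms unfolding line_system_def Field_def by blast

lemma line_system_lines_of:
  assumes "P \<in> PIstar X"
  shows "line_system X (lines_of P)"
proof (rule line_systemI)
  have part: "is_partition_of (ground X) P"
    using assms by (simp add: PIstar_def)
  fix A B assume AB: "(A, B) \<in> lines_of P"
  then have "line_of (A, B) \<subseteq> ground X"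
    using part unfolding lines_of_def is_partition_of_def by blast
  with AB show "A \<noteq> {} \<and> A \<subseteq> X \<and> B \<noteq> {} \<and> B \<subseteq> X"
    by (simp add: lines_of_def)
  fix C D assume CD: "(C, D) \<in> lines_of P" and meet: "A \<inter> C \<noteq> {} \<or> B \<inter> D \<noteq> {}"
  have "line_of (A, B) \<in> P" "line_of (C, D) \<in> P"
    using AB CD by (simp_all add: lines_of_def)
  moreover have "line_of (A, B) \<inter> line_of (C, D) \<noteq> {}"
    using meet by (simp add: line_of_disjoint)
  ultimately have "line_of (A, B) = line_of (C, D)"
    using part unfolding is_partition_of_def by blast
  then show "A = C \<and> B = D" by simp
qed

lemma line_of_lines_of:
  "line_of ` lines_of P = {Z \<in> P. gen_line Z}"
proof (intro equalityI subsetI)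
  fix Z assume Z: "Z \<in> {Z \<in> P. gen_line Z}"
  then have "Inl -` Z \<noteq> {}" "Inr -` Z \<noteq> {}"
    unfolding gen_line_def by auto
  with Z have "(Inl -` Z, Inr -` Z) \<in> lines_of P"
    unfolding lines_of_def by (simp add: line_of_vimage)
  then show "Z \<in> line_of ` lines_of P"
    by (rule rev_image_eqI) (simp add: line_of_vimage)
next
  fix Z assume "Z \<in> line_of ` lines_of P"
  then obtain A B where "(A, B) \<in> lines_of P" "Z = line_of (A, B)" by auto
  then show "Z \<in> {Z \<in> P. gen_line Z}"
    by (simp add: lines_of_def)
qed

lemma partition_of_lines_of:
  assumes "P \<in> PIstar X"
  shows "partition_of X (lines_of P) = P"
proof -
  have blocks: "\<forall>Z\<in>P. (\<exists>z. Z = {z}) \<or> gen_line Z"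
    and cover: "\<Union>P = ground X"
    and disjoint: "\<And>Y Z. Y \<in> P \<Longrightarrow> Z \<in> P \<Longrightarrow> Y \<noteq> Z \<Longrightarrow> Y \<inter> Z = {}"
    using assms by (auto simp: PIstar_def is_partition_of_def)
  have points: "{{z} | z. z \<in> ground X \<and> z \<notin> \<Union>{Z \<in> P. gen_line Z}} = {Z \<in> P. \<not> gen_line Z}"
  proof (intro equalityI subsetI)
    fix Z assume Z: "Z \<in> {Z \<in> P. \<not> gen_line Z}"
    then obtain z where z: "Z = {z}" using blocks by auto
    have "z \<in> ground X" using Z z cover by blast
    moreover have "z \<notin> Y" if "Y \<in> P" "gen_line Y" for Y
    proof
      assume "z \<in> Y"
      then have "Y = Z" using disjoint[OF that(1)] Z z by blast
      then show False using that(2) z by simp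
    qed
    ultimately show "Z \<in> {{z} | z. z \<in> ground X \<and> z \<notin> \<Union>{Z \<in> P. gen_line Z}}"
      using z by blast
  next
    fix Z assume "Z \<in> {{z} | z. z \<in> ground X \<and> z \<notin> \<Union>{Z \<in> P. gen_line Z}}"
    then obtain z where z: "Z = {z}" "z \<in> ground X" "z \<notin> \<Union>{Z \<in> P. gen_line Z}" by blast
    then obtain Y where Y: "Y \<in> P" "z \<in> Y" using cover by blast
    with z have "\<not> gen_line Y" by blast
    with Y blocks have "Y = Z" using z(1) by auto
    with Y \<open>\<not> gen_line Y\<close> show "Z \<in> {Z \<in> P. \<not> gen_line Z}" by simp
  qed
  have "partition_of X (lines_of P) = {Z \<in> P. gen_line Z} \<union> {Z \<in> P. \<not> gen_line Z}"
    unfolding partition_of_def line_of_lines_of points ..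
  also have "\<dots> = P" by blast
  finally show ?thesis .
qed

lemma line_of_not_singleton:
  assumes "A \<noteq> {}" and "B \<noteq> {}"
  shows "line_of (A, B) \<noteq> {z}"
  using assms gen_line_line_of not_gen_line_singleton by metis

lemma partition_of_in_PIstar:
  assumes L: "line_system X L"
  shows "partition_of X L \<in> PIstar X"
proof -
  have lines_sub: "line_of p \<subseteq> ground X" if "p \<in> L" for p
    using that line_systemD[OF L] by (cases p) simp
  have lines_disjoint: "line_of p \<inter> line_of q = {}" if "p \<in> L" "q \<in> L" "p \<noteq> q" for p q
  proof -
    obtain A B C D where pq: "p = (A, B)" "q = (C, D)" by (metis prod.exhaust)
    with that have "A \<inter> C = {} \<and> B \<inter> D = {}"
      using line_system_eq[OF L] by blast
    with pq show ?thesis by (simp add: line_of_disjoint)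
  qed
  have "\<Union>(partition_of X L) = ground X"
  proof (intro equalityI subsetI)
    fix z assume "z \<in> ground X"
    then show "z \<in> \<Union>(partition_of X L)"
      by (cases "z \<in> \<Union>(line_of ` L)") (auto simp: partition_of_def)
  qed (use lines_sub in \<open>auto simp: partition_of_def\<close>)
  moreover have "Y \<inter> Z = {}" if "Y \<in> partition_of X L" "Z \<in> partition_of X L" "Y \<noteq> Z" for Y Z
    using that lines_disjoint unfolding partition_of_def by blast
  moreover have "Z \<noteq> {} \<and> ((\<exists>z. Z = {z}) \<or> gen_line Z)" if "Z \<in> partition_of X L" for Z
  proof (cases "Z \<in> line_of ` L")
    case True
    then have "gen_line Z" using line_systemD[OF L] by auto
    then show ?thesis by (auto simp: gen_line_def)
  next
    case False
    then show ?thesis using that unfolding partition_of_def by auto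
  qed
  ultimately show ?thesis
    unfolding PIstar_def is_partition_of_def by blast
qed

lemma lines_of_partition_of:
  assumes L: "line_system X L"
  shows "lines_of (partition_of X L) = L"
proof (intro equalityI subsetI)
  fix p assume "p \<in> lines_of (partition_of X L)"
  then obtain A B where p: "p = (A, B)" "line_of (A, B) \<in> partition_of X L" "A \<noteq> {}" "B \<noteq> {}"
    unfolding lines_of_def by auto
  then have "line_of (A, B) \<in> line_of ` L"
    using line_of_not_singleton[OF p(3,4)] unfolding partition_of_def by blast
  then show "p \<in> L" using p(1) by auto
next
  fix p assume "p \<in> L"
  then show "p \<in> lines_of (partition_of X L)"
    using line_systemD[OF L] unfolding lines_of_def partition_of_def by (cases p) auto
qed

lemma bij_betw_partition_of: "bij_betw (partition_of X) {L. line_system X L} (PIstar X)"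
  by (rule bij_betw_byWitness[where f' = lines_of])
    (auto simp: lines_of_partition_of partition_of_lines_of partition_of_in_PIstar line_system_lines_of)

lemma bij_betw_lines_of: "bij_betw lines_of (PIstar X) {L. line_system X L}"
  by (rule bij_betw_byWitness[where f' = "partition_of X"])
    (auto simp: lines_of_partition_of partition_of_lines_of partition_of_in_PIstar line_system_lines_of)

lemma PI_lines_prod_eq: "PI_lines_prod P Q = line_of ` (lines_of P O lines_of Q)"
  unfolding PI_lines_prod_def lines_of_def line_of_Pair[symmetric] by fastforce

lemma PI_prod_eq: "PI_prod X P Q = partition_of X (lines_of P O lines_of Q)"
  unfolding PI_prod_def partition_of_def PI_lines_prod_eq ..

section \<open>The monoid of line systems under relational composition\<close>

lemma line_system_empty [simp]: "line_system X {}"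
  by (simp add: line_system_def)

lemma line_system_diag: "A \<noteq> {} \<Longrightarrow> A \<subseteq> X \<Longrightarrow> line_system X {(A, A)}"
  by (rule line_systemI) auto

lemma line_system_relcomp:
  assumes L: "line_system X L" and M: "line_system X M"
  shows "line_system X (L O M)"
proof (rule line_systemI)
  fix A D assume "(A, D) \<in> L O M"
  then obtain B where "(A, B) \<in> L" "(B, D) \<in> M" by blast
  then show "A \<noteq> {} \<and> A \<subseteq> X \<and> D \<noteq> {} \<and> D \<subseteq> X"
    using line_systemD(1,2)[OF L] line_systemD(3,4)[OF M] by simp
next
  fix A D A' D' assume "(A, D) \<in> L O M" "(A', D') \<in> L O M" and meet: "A \<inter> A' \<noteq> {} \<or> D \<inter> D' \<noteq> {}"
  then obtain B B' where AB: "(A, B) \<in> L" "(B, D) \<in> M" and AB': "(A', B') \<in> L" "(B', D') \<in> M"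
    by blast
  have "B = B'"
  proof (cases "A \<inter> A' = {}")
    case True
    with meet show ?thesis using line_system_eq(1)[OF M AB(2) AB'(2)] by blast
  next
    case False
    then show ?thesis using line_system_eq(2)[OF L AB(1) AB'(1)] by blast
  qed
  moreover have "B \<noteq> {}" using line_systemD(3)[OF L AB(1)] .
  ultimately show "A = A' \<and> D = D'"
    using line_system_eq(1)[OF L AB(1) AB'(1)] line_system_eq(2)[OF M AB(2) AB'(2)] by auto
qed

lemma partition_of_relcomp:
  assumes "line_system X L" and "line_system X M"
  shows "partition_of X (L O M) = PI_prod X (partition_of X L) (partition_of X M)"
  using assms by (simp add: PI_prod_eq lines_of_partition_of)

lemma mem_iff_diag_relcomp_diag: "(A, B) \<in> L \<longleftrightarrow> {(A, A)} O L O {(B, B)} \<noteq> {}"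
  by auto

lemma idempotent_line_system_diagonal:
  assumes L: "line_system X L" and idem: "L O L = L" and AB: "(A, B) \<in> L"
  shows "A = B"
proof -
  obtain C where AC: "(A, C) \<in> L" and CB: "(C, B) \<in> L"
    using AB idem by blast
  have "C = B"
    using line_system_eq[OF L AC AB] line_systemD(1)[OF L AB] by simp
  with CB have "(B, B) \<in> L" by simp
  then show "A = B"
    using line_system_eq[OF L AB] line_systemD(3)[OF L AB] by simp
qed

definition minimal_idempotent :: "'a set \<Rightarrow> ('a set \<times> 'a set) set \<Rightarrow> bool" where
  "minimal_idempotent X L \<longleftrightarrow> line_system X L \<and> L \<noteq> {} \<and> L O L = L \<and>
     (\<forall>N. line_system X N \<longrightarrow> N O N = N \<and> N O L = N \<longrightarrow> N = {} \<or> N = L)"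

lemma minimal_idempotent_iff:
  "minimal_idempotent X L \<longleftrightarrow> (\<exists>A. A \<noteq> {} \<and> A \<subseteq> X \<and> L = {(A, A)})"
proof
  assume min: "minimal_idempotent X L"
  then have L: "line_system X L" and idem: "L O L = L"
    by (simp_all add: minimal_idempotent_def)
  from min obtain A B where AB: "(A, B) \<in> L"
    by (auto simp: minimal_idempotent_def)
  with idempotent_line_system_diagonal[OF L idem AB] have AA: "(A, A) \<in> L" by simp
  have "{(A, A)} O L = {(A, A)}"
  proof (intro equalityI subsetI)
    fix p assume "p \<in> {(A, A)} O L"
    then obtain D where "(A, D) \<in> L" "p = (A, D)" by blast
    then show "p \<in> {(A, A)}"
      using idempotent_line_system_diagonal[OF L idem, of A D] by simp
  qed (use AA in blast)
  moreover have "{(A, A)} O {(A, A)} = {(A, A)}" by auto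
  moreover have minimal: "\<And>N. line_system X N \<Longrightarrow> N O N = N \<Longrightarrow> N O L = N \<Longrightarrow> N = {} \<or> N = L"
    using min by (simp add: minimal_idempotent_def)
  ultimately have "{(A, A)} = {} \<or> {(A, A)} = L"
    using line_system_diag[OF line_systemD(1,2)[OF L AA]] by (intro minimal)
  then have "{(A, A)} = L" by simp
  with line_systemD(1,2)[OF L AA] show "\<exists>A. A \<noteq> {} \<and> A \<subseteq> X \<and> L = {(A, A)}" by blast
next
  assume "\<exists>A. A \<noteq> {} \<and> A \<subseteq> X \<and> L = {(A, A)}"
  then obtain A where A: "A \<noteq> {}" "A \<subseteq> X" and L: "L = {(A, A)}" by blast
  have "N = {} \<or> N = L" if N: "line_system X N" "N O N = N" "N O L = N" for N
  proof -
    have "N \<subseteq> {(A, A)}"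
    proof
      fix p assume "p \<in> N"
      then have "p \<in> N O {(A, A)}" using N(3) L by simp
      then obtain C where "p = (C, A)" "(C, A) \<in> N" by blast
      then show "p \<in> {(A, A)}"
        using idempotent_line_system_diagonal[OF N(1,2), of C A] by simp
    qed
    then show ?thesis using L by blast
  qed
  then show "minimal_idempotent X L"
    unfolding minimal_idempotent_def using line_system_diag[OF A] L by auto
qed

lemma disjoint_or_eq_iff_ex_line_system:
  assumes "A \<noteq> {}" "A \<subseteq> X" "B \<noteq> {}" "B \<subseteq> X"
  shows "A \<inter> B = {} \<or> A = B \<longleftrightarrow>
    (\<exists>N. line_system X N \<and> {(A, A)} O N = {(A, A)} \<and> {(B, B)} O N = {(B, B)})"
proof
  assume "A \<inter> B = {} \<or> A = B"
  then have "line_system X {(A, A), (B, B)}"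
    using assms by (intro line_systemI) auto
  moreover have "{(A, A)} O {(A, A), (B, B)} = {(A, A)}" "{(B, B)} O {(A, A), (B, B)} = {(B, B)}"
    by auto
  ultimately show "\<exists>N. line_system X N \<and> {(A, A)} O N = {(A, A)} \<and> {(B, B)} O N = {(B, B)}"
    by blast
next
  assume "\<exists>N. line_system X N \<and> {(A, A)} O N = {(A, A)} \<and> {(B, B)} O N = {(B, B)}"
  then obtain N where N: "line_system X N"
    and "(A, A) \<in> {(A, A)} O N" "(B, B) \<in> {(B, B)} O N"
    by auto
  then have "(A, A) \<in> N" "(B, B) \<in> N" by blast+
  then show "A \<inter> B = {} \<or> A = B"
    using line_system_eq(1)[OF N] by blast
qed

section \<open>Line systems transported along a map\<close>

definition line_map :: "('a \<Rightarrow> 'b) \<Rightarrow> ('a set \<times> 'a set) set \<Rightarrow> ('b set \<times> 'b set) set" where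
  "line_map \<sigma> L = map_prod ((`) \<sigma>) ((`) \<sigma>) ` L"

lemma line_map_memI: "(A, B) \<in> L \<Longrightarrow> (\<sigma> ` A, \<sigma> ` B) \<in> line_map \<sigma> L"
  unfolding line_map_def by (rule rev_image_eqI) auto

lemma line_map_memE:
  assumes "q \<in> line_map \<sigma> L"
  obtains A B where "(A, B) \<in> L" and "q = (\<sigma> ` A, \<sigma> ` B)"
  using assms unfolding line_map_def by auto

lemma line_system_line_map:
  assumes inj: "inj_on \<sigma> X" and into: "\<sigma> ` X \<subseteq> X'" and L: "line_system X L"
  shows "line_system X' (line_map \<sigma> L)"
proof (rule line_systemI)
  fix A' B' assume "(A', B') \<in> line_map \<sigma> L"
  then obtain A B where "(A, B) \<in> L" "A' = \<sigma> ` A" "B' = \<sigma> ` B"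
    by (auto elim: line_map_memE)
  with line_systemD[OF L] into show "A' \<noteq> {} \<and> A' \<subseteq> X' \<and> B' \<noteq> {} \<and> B' \<subseteq> X'"
    by blast
next
  fix A' B' C' D'
  assume "(A', B') \<in> line_map \<sigma> L" "(C', D') \<in> line_map \<sigma> L"
    and meet: "A' \<inter> C' \<noteq> {} \<or> B' \<inter> D' \<noteq> {}"
  then obtain A B C D where AB: "(A, B) \<in> L" "A' = \<sigma> ` A" "B' = \<sigma> ` B"
    and CD: "(C, D) \<in> L" "C' = \<sigma> ` C" "D' = \<sigma> ` D"
    by (auto elim!: line_map_memE)
  have "\<sigma> ` A \<inter> \<sigma> ` C = \<sigma> ` (A \<inter> C)" "\<sigma> ` B \<inter> \<sigma> ` D = \<sigma> ` (B \<inter> D)"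
    using inj_on_image_Int[OF inj] line_systemD[OF L AB(1)] line_systemD[OF L CD(1)] by simp_all
  with meet AB CD have "A \<inter> C \<noteq> {} \<or> B \<inter> D \<noteq> {}" by auto
  with AB CD show "A' = C' \<and> B' = D'"
    using line_system_eq[OF L AB(1) CD(1)] by simp
qed

lemma line_map_relcomp:
  assumes inj: "inj_on \<sigma> X" and L: "line_system X L" and M: "line_system X M"
  shows "line_map \<sigma> (L O M) = line_map \<sigma> L O line_map \<sigma> M"
proof (intro equalityI subsetI)
  fix q assume "q \<in> line_map \<sigma> (L O M)"
  then obtain A B D where "(A, B) \<in> L" "(B, D) \<in> M" "q = (\<sigma> ` A, \<sigma> ` D)"
    by (auto elim!: line_map_memE)
  then show "q \<in> line_map \<sigma> L O line_map \<sigma> M"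
    by (blast intro: line_map_memI)
next
  fix q assume "q \<in> line_map \<sigma> L O line_map \<sigma> M"
  then obtain A B B' D where AB: "(A, B) \<in> L" and BD: "(B', D) \<in> M"
    and q: "q = (\<sigma> ` A, \<sigma> ` D)" and "\<sigma> ` B = \<sigma> ` B'"
    by (auto elim!: line_map_memE)
  moreover have "B \<subseteq> X" "B' \<subseteq> X"
    using line_systemD[OF L AB] line_systemD[OF M BD] by simp_all
  ultimately have "B = B'"
    using inj_on_image_eq_iff[OF inj] by blast
  with AB BD q show "q \<in> line_map \<sigma> (L O M)"
    by (blast intro: line_map_memI)
qed

lemma line_map_line_map: "line_map \<sigma> (line_map \<tau> L) = line_map (\<sigma> \<circ> \<tau>) L"
proof -
  have "(`) \<sigma> \<circ> (`) \<tau> = (`) (\<sigma> \<circ> \<tau>)"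
    by (simp add: fun_eq_iff image_comp)
  then show ?thesis
    by (simp add: line_map_def image_comp map_prod.comp)
qed

lemma line_map_cong:
  assumes L: "line_system X L" and eq: "\<And>x. x \<in> X \<Longrightarrow> \<sigma> x = \<tau> x"
  shows "line_map \<sigma> L = line_map \<tau> L"
  unfolding line_map_def
proof (rule image_cong[OF refl])
  fix p assume "p \<in> L"
  moreover obtain A B where "p = (A, B)" by fastforce
  ultimately have "A \<subseteq> X" "B \<subseteq> X" "p = (A, B)"
    using line_systemD[OF L] by auto
  then show "map_prod ((`) \<sigma>) ((`) \<sigma>) p = map_prod ((`) \<tau>) ((`) \<tau>) p"
    using eq by (auto intro!: image_cong)
qed

lemma line_map_id: "line_map id L = L"
  by (simp add: line_map_def map_prod.id)

lemma bij_betw_line_map: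
  assumes \<sigma>: "\<sigma> \<in> Bij X"
  shows "bij_betw (line_map \<sigma>) {L. line_system X L} {L. line_system X L}"
proof (rule bij_betw_byWitness[where f' = "line_map (inv_into X \<sigma>)"])
  have inj: "inj_on \<sigma> X" and surj: "\<sigma> ` X = X"
    using \<sigma> by (simp_all add: Bij_def bij_betw_def)
  have inj_inv: "inj_on (inv_into X \<sigma>) X" and surj_inv: "inv_into X \<sigma> ` X \<subseteq> X"
    using inj_on_inv_into[of X \<sigma> X] inv_into_into[of _ \<sigma> X] surj by auto
  show "\<forall>L\<in>{L. line_system X L}. line_map (inv_into X \<sigma>) (line_map \<sigma> L) = L"
  proof
    fix L assume "L \<in> {L. line_system X L}"
    then have "line_map (inv_into X \<sigma> \<circ> \<sigma>) L = line_map id L"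
      by (intro line_map_cong[of X]) (simp_all add: inv_into_f_f[OF inj])
    then show "line_map (inv_into X \<sigma>) (line_map \<sigma> L) = L"
      by (simp add: line_map_line_map line_map_id)
  qed
  show "\<forall>L\<in>{L. line_system X L}. line_map \<sigma> (line_map (inv_into X \<sigma>) L) = L"
  proof
    fix L assume "L \<in> {L. line_system X L}"
    then have "line_map (\<sigma> \<circ> inv_into X \<sigma>) L = line_map id L"
      by (intro line_map_cong[of X]) (simp_all add: f_inv_into_f surj)
    then show "line_map \<sigma> (line_map (inv_into X \<sigma>) L) = L"
      by (simp add: line_map_line_map line_map_id)
  qed
  show "line_map \<sigma> ` {L. line_system X L} \<subseteq> {L. line_system X L}"
    using line_system_line_map[OF inj] surj by auto
  show "line_map (inv_into X \<sigma>) ` {L. line_system X L} \<subseteq> {L. line_system X L}"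
    using line_system_line_map[OF inj_inv surj_inv] by auto
qed

section \<open>Automorphisms of the monoid of line systems\<close>

locale line_system_aut =
  fixes X :: "'a set" and \<psi> :: "('a set \<times> 'a set) set \<Rightarrow> ('a set \<times> 'a set) set"
  assumes bij: "bij_betw \<psi> {L. line_system X L} {L. line_system X L}"
    and relcomp: "\<And>L M. line_system X L \<Longrightarrow> line_system X M \<Longrightarrow> \<psi> (L O M) = \<psi> L O \<psi> M"
begin

lemma line_system_image: "line_system X L \<Longrightarrow> line_system X (\<psi> L)"
  using bij_betw_apply[OF bij] by simp

lemma image_eq_iff: "line_system X L \<Longrightarrow> line_system X M \<Longrightarrow> \<psi> L = \<psi> M \<longleftrightarrow> L = M"
  using inj_on_eq_iff[OF bij_betw_imp_inj_on[OF bij]] by simp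

lemma ex_preimage:
  assumes "line_system X N"
  obtains L where "line_system X L" and "\<psi> L = N"
proof -
  from assms have "N \<in> \<psi> ` {L. line_system X L}"
    using bij_betw_imp_surj_on[OF bij] by simp
  with that show thesis by blast
qed

lemma all_image_iff: "(\<forall>N. line_system X N \<longrightarrow> P N) \<longleftrightarrow> (\<forall>N. line_system X N \<longrightarrow> P (\<psi> N))"
  using line_system_image ex_preimage by metis

lemma ex_image_iff: "(\<exists>N. line_system X N \<and> P N) \<longleftrightarrow> (\<exists>N. line_system X N \<and> P (\<psi> N))"
  using line_system_image ex_preimage by metis

lemma image_empty [simp]: "\<psi> {} = {}"
proof -
  obtain M where "line_system X M" and "\<psi> M = {}"
    using ex_preimage[OF line_system_empty] .
  then have "\<psi> ({} O M) = \<psi> {} O {}"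
    using relcomp[OF line_system_empty] by metis
  then show ?thesis by simp
qed

lemma image_eq_empty_iff: "line_system X L \<Longrightarrow> \<psi> L = {} \<longleftrightarrow> L = {}"
  using image_eq_iff[OF _ line_system_empty] by simp

lemma relcomp_image_eq_iff:
  assumes "line_system X L" and "line_system X M" and "line_system X K"
  shows "\<psi> L O \<psi> M = \<psi> K \<longleftrightarrow> L O M = K"
  using assms by (simp add: relcomp[symmetric] image_eq_iff line_system_relcomp)

lemma minimal_idempotent_image_iff:
  assumes L: "line_system X L"
  shows "minimal_idempotent X (\<psi> L) \<longleftrightarrow> minimal_idempotent X L"
proof -
  let ?minimal = "\<lambda>K. \<forall>N. line_system X N \<longrightarrow> N O N = N \<and> N O K = N \<longrightarrow> N = {} \<or> N = K"
  have "?minimal (\<psi> L) \<longleftrightarrow>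
      (\<forall>N. line_system X N \<longrightarrow> \<psi> N O \<psi> N = \<psi> N \<and> \<psi> N O \<psi> L = \<psi> N \<longrightarrow> \<psi> N = {} \<or> \<psi> N = \<psi> L)"
    by (rule all_image_iff)
  also have "\<dots> \<longleftrightarrow> ?minimal L"
    using L by (simp add: relcomp_image_eq_iff image_eq_empty_iff image_eq_iff)
  finally show ?thesis
    using L line_system_image[OF L]
    by (simp add: minimal_idempotent_def relcomp_image_eq_iff image_eq_empty_iff)
qed

lemma diag_image:
  assumes "A \<in> Pow X - {{}}"
  obtains B where "B \<in> Pow X - {{}}" and "\<psi> {(A, A)} = {(B, B)}"
proof -
  have "line_system X {(A, A)}" and "minimal_idempotent X {(A, A)}"
    using assms by (auto simp: line_system_diag minimal_idempotent_iff)
  then have "minimal_idempotent X (\<psi> {(A, A)})"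
    using minimal_idempotent_image_iff by blast
  with that show thesis
    unfolding minimal_idempotent_iff by blast
qed

lemma diag_image_disjoint_iff:
  assumes A: "A \<in> Pow X - {{}}" and B: "B \<in> Pow X - {{}}"
    and A': "A' \<in> Pow X - {{}}" and B': "B' \<in> Pow X - {{}}"
    and \<psi>A: "\<psi> {(A, A)} = {(A', A')}" and \<psi>B: "\<psi> {(B, B)} = {(B', B')}"
  shows "A' \<inter> B' = {} \<longleftrightarrow> A \<inter> B = {}"
proof -
  have diag: "line_system X {(A, A)}" "line_system X {(B, B)}"
    using A B by (simp_all add: line_system_diag)
  have "A' \<inter> B' = {} \<or> A' = B' \<longleftrightarrow>
      (\<exists>N. line_system X N \<and> {(A', A')} O N = {(A', A')} \<and> {(B', B')} O N = {(B', B')})"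
    using A' B' by (intro disjoint_or_eq_iff_ex_line_system) auto
  also have "\<dots> \<longleftrightarrow>
      (\<exists>N. line_system X N \<and> \<psi> {(A, A)} O \<psi> N = \<psi> {(A, A)} \<and> \<psi> {(B, B)} O \<psi> N = \<psi> {(B, B)})"
    unfolding \<psi>A \<psi>B by (rule ex_image_iff)
  also have "\<dots> \<longleftrightarrow> (\<exists>N. line_system X N \<and> {(A, A)} O N = {(A, A)} \<and> {(B, B)} O N = {(B, B)})"
    using diag by (simp add: relcomp_image_eq_iff cong: conj_cong)
  also have "\<dots> \<longleftrightarrow> A \<inter> B = {} \<or> A = B"
    using A B by (intro disjoint_or_eq_iff_ex_line_system[symmetric]) auto
  finally have "A' \<inter> B' = {} \<or> A' = B' \<longleftrightarrow> A \<inter> B = {} \<or> A = B" .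
  moreover have "A' = B' \<longleftrightarrow> A = B"
    using image_eq_iff[OF diag] \<psi>A \<psi>B by auto
  moreover have "A \<inter> B = {} \<Longrightarrow> A \<noteq> B" "A' \<inter> B' = {} \<Longrightarrow> A' \<noteq> B'"
    using A A' by auto
  ultimately show ?thesis by blast
qed

lemma ex_diag_permutation:
  obtains f where "bij_betw f (Pow X - {{}}) (Pow X - {{}})"
    and "\<And>A. A \<in> Pow X - {{}} \<Longrightarrow> \<psi> {(A, A)} = {(f A, f A)}"
proof -
  let ?N = "Pow X - {{}}"
  have "\<forall>A\<in>?N. \<exists>B. B \<in> ?N \<and> \<psi> {(A, A)} = {(B, B)}"
    using diag_image by metis
  then obtain f where f: "\<And>A. A \<in> ?N \<Longrightarrow> f A \<in> ?N \<and> \<psi> {(A, A)} = {(f A, f A)}"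
    by metis
  have "bij_betw f ?N ?N"
  proof (rule bij_betw_imageI)
    show "inj_on f ?N"
    proof (rule inj_onI)
      fix A A' assume A: "A \<in> ?N" and A': "A' \<in> ?N" and "f A = f A'"
      then have "\<psi> {(A, A)} = \<psi> {(A', A')}" using f by simp
      moreover have "line_system X {(A, A)}" "line_system X {(A', A')}"
        using A A' by (simp_all add: line_system_diag)
      ultimately show "A = A'"
        using image_eq_iff by blast
    qed
    show "f ` ?N = ?N"
    proof (intro equalityI subsetI)
      fix B assume B: "B \<in> ?N"
      then have "line_system X {(B, B)}" by (simp add: line_system_diag)
      then obtain L where L: "line_system X L" "\<psi> L = {(B, B)}"
        by (rule ex_preimage)
      with B have "minimal_idempotent X (\<psi> L)"
        by (simp add: minimal_idempotent_iff)
      then have "minimal_idempotent X L"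
        using minimal_idempotent_image_iff[OF L(1)] by simp
      then obtain A where A: "A \<in> ?N" "L = {(A, A)}"
        unfolding minimal_idempotent_iff by auto
      then have "B = f A" using f L by simp
      with A show "B \<in> f ` ?N" by blast
    qed (use f in blast)
  qed
  moreover have "\<And>A. A \<in> ?N \<Longrightarrow> \<psi> {(A, A)} = {(f A, f A)}"
    using f by blast
  ultimately show thesis by (rule that)
qed

lemma ex_induced_permutation:
  obtains \<sigma> where "\<sigma> \<in> Bij X" and "\<And>A. A \<in> Pow X - {{}} \<Longrightarrow> \<psi> {(A, A)} = {(\<sigma> ` A, \<sigma> ` A)}"
proof -
  obtain f where f: "bij_betw f (Pow X - {{}}) (Pow X - {{}})"
    and \<psi>_diag: "\<And>A. A \<in> Pow X - {{}} \<Longrightarrow> \<psi> {(A, A)} = {(f A, f A)}"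
    using ex_diag_permutation by blast
  have disjoint_iff: "f A \<inter> f B = {} \<longleftrightarrow> A \<inter> B = {}"
    if "A \<in> Pow X - {{}}" "B \<in> Pow X - {{}}" for A B
    using diag_image_disjoint_iff[OF that bij_betw_apply[OF f] bij_betw_apply[OF f]]
      \<psi>_diag[OF that(1)] \<psi>_diag[OF that(2)] that by simp
  obtain \<sigma> where "\<sigma> \<in> Bij X" "\<And>A. A \<in> Pow X - {{}} \<Longrightarrow> f A = \<sigma> ` A"
    using subset_preserving_bij_is_image[OF f subset_iff_if_disjoint_iff[OF f disjoint_iff]] by blast
  with \<psi>_diag that show thesis by simp
qed

lemma mem_image_iff:
  assumes L: "line_system X L" and A: "A \<in> Pow X - {{}}" and B: "B \<in> Pow X - {{}}"
    and \<psi>A: "\<psi> {(A, A)} = {(A', A')}" and \<psi>B: "\<psi> {(B, B)} = {(B', B')}"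
  shows "(A, B) \<in> L \<longleftrightarrow> (A', B') \<in> \<psi> L"
proof -
  have diag: "line_system X {(A, A)}" "line_system X {(B, B)}"
    using A B by (simp_all add: line_system_diag)
  then have "line_system X ({(A, A)} O L O {(B, B)})"
    using L by (simp add: line_system_relcomp)
  then have "(A, B) \<in> L \<longleftrightarrow> \<psi> ({(A, A)} O L O {(B, B)}) \<noteq> {}"
    by (simp add: image_eq_empty_iff mem_iff_diag_relcomp_diag)
  also have "\<psi> ({(A, A)} O L O {(B, B)}) = {(A', A')} O \<psi> L O {(B', B')}"
    using L diag \<psi>A \<psi>B by (simp add: relcomp line_system_relcomp)
  finally show ?thesis
    by (simp add: mem_iff_diag_relcomp_diag)
qed

lemma ex_induced_line_map:
  obtains \<sigma> where "\<sigma> \<in> Bij X" and "\<And>L. line_system X L \<Longrightarrow> \<psi> L = line_map \<sigma> L"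
proof -
  let ?N = "Pow X - {{}}"
  obtain \<sigma> where \<sigma>: "\<sigma> \<in> Bij X" and \<psi>_diag: "\<And>A. A \<in> ?N \<Longrightarrow> \<psi> {(A, A)} = {(\<sigma> ` A, \<sigma> ` A)}"
    using ex_induced_permutation by blast
  have mem_iff: "(A, B) \<in> L \<longleftrightarrow> (\<sigma> ` A, \<sigma> ` B) \<in> \<psi> L"
    if "line_system X L" "A \<in> ?N" "B \<in> ?N" for L A B
    using mem_image_iff[OF that \<psi>_diag \<psi>_diag] that(2,3) .
  have "\<psi> L = line_map \<sigma> L" if L: "line_system X L" for L
  proof (intro equalityI subsetI)
    fix q assume q: "q \<in> \<psi> L"
    obtain C D where "q = (C, D)" by fastforce
    with q have CD: "q = (C, D)" "C \<in> ?N" "D \<in> ?N"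
      using line_systemD[OF line_system_image[OF L], of C D] by simp_all
    then have "C \<in> (`) \<sigma> ` ?N" "D \<in> (`) \<sigma> ` ?N"
      using Bij_image_nonempty_subsets[OF \<sigma>] by simp_all
    then obtain A B where AB: "A \<in> ?N" "B \<in> ?N" "C = \<sigma> ` A" "D = \<sigma> ` B"
      by blast
    with q CD have "(A, B) \<in> L" using mem_iff[OF L] by simp
    with AB CD show "q \<in> line_map \<sigma> L" by (simp add: line_map_memI)
  next
    fix q assume "q \<in> line_map \<sigma> L"
    then obtain A B where AB: "(A, B) \<in> L" "q = (\<sigma> ` A, \<sigma> ` B)"
      by (rule line_map_memE)
    moreover have "A \<in> ?N" "B \<in> ?N"
      using line_systemD[OF L AB(1)] by simp_all
    ultimately show "q \<in> \<psi> L" using mem_iff[OF L] by simp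
  qed
  with \<sigma> that show thesis by blast
qed

end

section \<open>Automorphisms induced by permutations\<close>

lemma carrier_PIstar_monoid [simp]: "carrier (PIstar_monoid X) = PIstar X"
  and mult_PIstar_monoid [simp]: "mult (PIstar_monoid X) = PI_prod X"
  by (simp_all add: PIstar_monoid_def)

definition induced_aut :: "'a set \<Rightarrow> ('a \<Rightarrow> 'a) \<Rightarrow> ('a + 'a) set set \<Rightarrow> ('a + 'a) set set" where
  "induced_aut X \<sigma> = (\<lambda>P \<in> PIstar X. partition_of X (line_map \<sigma> (lines_of P)))"

lemma induced_aut_apply:
  "P \<in> PIstar X \<Longrightarrow> induced_aut X \<sigma> P = partition_of X (line_map \<sigma> (lines_of P))"
  by (simp add: induced_aut_def)

lemma bij_betw_induced_aut:
  assumes "\<sigma> \<in> Bij X"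
  shows "bij_betw (induced_aut X \<sigma>) (PIstar X) (PIstar X)"
proof -
  have "bij_betw (partition_of X \<circ> line_map \<sigma> \<circ> lines_of) (PIstar X) (PIstar X)"
    using bij_betw_lines_of bij_betw_line_map[OF assms] bij_betw_partition_of
    by (blast intro: bij_betw_trans)
  then show ?thesis
    by (rule bij_betw_cong[THEN iffD1, rotated]) (simp add: induced_aut_def)
qed

lemma lines_of_induced_aut:
  assumes "\<sigma> \<in> Bij X" and "P \<in> PIstar X"
  shows "lines_of (induced_aut X \<sigma> P) = line_map \<sigma> (lines_of P)"
  using assms line_system_line_map[of \<sigma> X X] line_system_lines_of[of P X]
  by (simp add: induced_aut_def lines_of_partition_of Bij_def bij_betw_def)

lemma induced_aut_PI_prod:
  assumes \<sigma>: "\<sigma> \<in> Bij X" and P: "P \<in> PIstar X" and Q: "Q \<in> PIstar X"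
  shows "induced_aut X \<sigma> (PI_prod X P Q) = PI_prod X (induced_aut X \<sigma> P) (induced_aut X \<sigma> Q)"
proof -
  have inj: "inj_on \<sigma> X" and into: "\<sigma> ` X \<subseteq> X"
    using \<sigma> by (auto simp: Bij_def bij_betw_def)
  have L: "line_system X (lines_of P)" and M: "line_system X (lines_of Q)"
    using P Q by (simp_all add: line_system_lines_of)
  have "PI_prod X P Q = partition_of X (lines_of P O lines_of Q)"
    by (rule PI_prod_eq)
  moreover have "partition_of X (lines_of P O lines_of Q) \<in> PIstar X"
    using L M by (simp add: partition_of_in_PIstar line_system_relcomp)
  ultimately have "induced_aut X \<sigma> (PI_prod X P Q) =
      partition_of X (line_map \<sigma> (lines_of P) O line_map \<sigma> (lines_of Q))"
    using L M by (simp add: induced_aut_def lines_of_partition_of line_system_relcomp line_map_relcomp[OF inj])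
  also have "\<dots> = PI_prod X (induced_aut X \<sigma> P) (induced_aut X \<sigma> Q)"
    using line_system_line_map[OF inj into L] line_system_line_map[OF inj into M] P Q
    by (simp add: partition_of_relcomp induced_aut_def)
  finally show ?thesis .
qed

lemma induced_aut_in_auto:
  assumes "\<sigma> \<in> Bij X"
  shows "induced_aut X \<sigma> \<in> auto (PIstar_monoid X)"
proof -
  have "induced_aut X \<sigma> \<in> hom (PIstar_monoid X) (PIstar_monoid X)"
    using bij_betw_apply[OF bij_betw_induced_aut[OF assms]] induced_aut_PI_prod[OF assms]
    by (simp add: hom_def)
  moreover have "induced_aut X \<sigma> \<in> Bij (PIstar X)"
    using bij_betw_induced_aut[OF assms] by (simp add: Bij_def induced_aut_def)
  ultimately show ?thesis by (simp add: auto_def)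
qed

lemma induced_aut_compose:
  assumes \<sigma>: "\<sigma> \<in> Bij X" and \<tau>: "\<tau> \<in> Bij X"
  shows "induced_aut X (compose X \<sigma> \<tau>) = compose (PIstar X) (induced_aut X \<sigma>) (induced_aut X \<tau>)"
proof (rule extensionalityI[of _ "PIstar X"])
  fix P assume P: "P \<in> PIstar X"
  have "compose (PIstar X) (induced_aut X \<sigma>) (induced_aut X \<tau>) P = induced_aut X \<sigma> (induced_aut X \<tau> P)"
    using P by (simp add: compose_eq)
  also have "\<dots> = partition_of X (line_map (\<sigma> \<circ> \<tau>) (lines_of P))"
    using bij_betw_apply[OF bij_betw_induced_aut[OF \<tau>] P]
    by (simp add: induced_aut_apply lines_of_induced_aut[OF \<tau> P] line_map_line_map)
  also have "line_map (\<sigma> \<circ> \<tau>) (lines_of P) = line_map (compose X \<sigma> \<tau>) (lines_of P)"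
    using P by (intro line_map_cong[of X]) (simp_all add: line_system_lines_of compose_eq)
  finally show "induced_aut X (compose X \<sigma> \<tau>) P = compose (PIstar X) (induced_aut X \<sigma>) (induced_aut X \<tau>) P"
    using P by (simp add: induced_aut_apply)
qed (simp_all add: induced_aut_def compose_def)

lemma inj_on_induced_aut: "inj_on (induced_aut X) (Bij X)"
proof (rule inj_onI)
  fix \<sigma> \<tau> assume \<sigma>: "\<sigma> \<in> Bij X" and \<tau>: "\<tau> \<in> Bij X" and eq: "induced_aut X \<sigma> = induced_aut X \<tau>"
  show "\<sigma> = \<tau>"
  proof (rule extensionalityI[of _ X])
    fix x assume "x \<in> X"
    then have L: "line_system X {({x}, {x})}" by (simp add: line_system_diag)
    let ?P = "partition_of X {({x}, {x})}"
    have "line_map \<sigma> {({x}, {x})} = line_map \<tau> {({x}, {x})}"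
      using lines_of_induced_aut[OF \<sigma>, of ?P] lines_of_induced_aut[OF \<tau>, of ?P] eq
      by (simp add: partition_of_in_PIstar[OF L] lines_of_partition_of[OF L])
    then show "\<sigma> x = \<tau> x" by (simp add: line_map_def)
  qed (use \<sigma> \<tau> in \<open>simp_all add: Bij_imp_extensional\<close>)
qed

lemma line_system_aut_conjugate:
  assumes \<phi>: "\<phi> \<in> auto (PIstar_monoid X)"
  shows "line_system_aut X (\<lambda>L. lines_of (\<phi> (partition_of X L)))"
proof
  have hom: "\<phi> \<in> hom (PIstar_monoid X) (PIstar_monoid X)" and "\<phi> \<in> Bij (PIstar X)"
    using \<phi> by (simp_all add: auto_def)
  then have bij: "bij_betw \<phi> (PIstar X) (PIstar X)" by (simp add: Bij_def)
  have "bij_betw (lines_of \<circ> \<phi> \<circ> partition_of X) {L. line_system X L} {L. line_system X L}"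
    using bij_betw_partition_of bij bij_betw_lines_of by (blast intro: bij_betw_trans)
  then show "bij_betw (\<lambda>L. lines_of (\<phi> (partition_of X L))) {L. line_system X L} {L. line_system X L}"
    by (simp add: comp_def)
  fix L M assume L: "line_system X L" and M: "line_system X M"
  have in_PIstar: "partition_of X L \<in> PIstar X" "partition_of X M \<in> PIstar X"
    using L M by (simp_all add: partition_of_in_PIstar)
  then have "\<phi> (partition_of X (L O M)) = PI_prod X (\<phi> (partition_of X L)) (\<phi> (partition_of X M))"
    using hom_mult[OF hom, of "partition_of X L" "partition_of X M"] L M
    by (simp add: partition_of_relcomp)
  also have "\<dots> = partition_of X (lines_of (\<phi> (partition_of X L)) O lines_of (\<phi> (partition_of X M)))"
    by (rule PI_prod_eq)
  finally show "lines_of (\<phi> (partition_of X (L O M))) =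
      lines_of (\<phi> (partition_of X L)) O lines_of (\<phi> (partition_of X M))"
    using in_PIstar bij_betw_apply[OF bij]
    by (simp add: lines_of_partition_of line_system_relcomp line_system_lines_of)
qed

lemma auto_eq_induced_aut:
  assumes \<phi>: "\<phi> \<in> auto (PIstar_monoid X)"
  obtains \<sigma> where "\<sigma> \<in> Bij X" and "\<phi> = induced_aut X \<sigma>"
proof -
  interpret line_system_aut X "\<lambda>L. lines_of (\<phi> (partition_of X L))"
    using \<phi> by (rule line_system_aut_conjugate)
  obtain \<sigma> where \<sigma>: "\<sigma> \<in> Bij X"
    and \<psi>: "\<And>L. line_system X L \<Longrightarrow> lines_of (\<phi> (partition_of X L)) = line_map \<sigma> L"
    using ex_induced_line_map by blast
  have \<phi>_Bij: "\<phi> \<in> Bij (PIstar X)" and \<phi>_in: "\<And>P. P \<in> PIstar X \<Longrightarrow> \<phi> P \<in> PIstar X"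
    using \<phi> by (auto simp: auto_def hom_def)
  have "\<phi> = induced_aut X \<sigma>"
  proof (rule extensionalityI[of _ "PIstar X"])
    fix P assume P: "P \<in> PIstar X"
    have "\<phi> P = partition_of X (lines_of (\<phi> (partition_of X (lines_of P))))"
      using P \<phi>_in[OF P] by (simp add: partition_of_lines_of)
    also have "\<dots> = induced_aut X \<sigma> P"
      using P by (simp add: \<psi> line_system_lines_of induced_aut_def)
    finally show "\<phi> P = induced_aut X \<sigma> P" .
  qed (use \<phi>_Bij in \<open>simp_all add: Bij_imp_extensional induced_aut_def\<close>)
  with \<sigma> that show thesis by blast
qed

lemma induced_aut_iso: "induced_aut X \<in> iso (BijGroup X) (AutoGroup (PIstar_monoid X))"
proof (rule isoI)
  have carriers: "carrier (BijGroup X) = Bij X" "carrier (AutoGroup (PIstar_monoid X)) = auto (PIstar_monoid X)"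
    by (simp_all add: BijGroup_def AutoGroup_def)
  show "induced_aut X \<in> hom (BijGroup X) (AutoGroup (PIstar_monoid X))"
  proof (rule homI)
    fix \<sigma> \<tau> assume "\<sigma> \<in> carrier (BijGroup X)" "\<tau> \<in> carrier (BijGroup X)"
    then have \<sigma>: "\<sigma> \<in> Bij X" and \<tau>: "\<tau> \<in> Bij X" by (simp_all add: carriers)
    have "induced_aut X \<sigma> \<in> Bij (PIstar X)" "induced_aut X \<tau> \<in> Bij (PIstar X)"
      using induced_aut_in_auto[OF \<sigma>] induced_aut_in_auto[OF \<tau>] by (simp_all add: auto_def)
    with \<sigma> \<tau> show "induced_aut X (\<sigma> \<otimes>\<^bsub>BijGroup X\<^esub> \<tau>) =
        induced_aut X \<sigma> \<otimes>\<^bsub>AutoGroup (PIstar_monoid X)\<^esub> induced_aut X \<tau>"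
      by (simp add: BijGroup_def AutoGroup_def induced_aut_compose)
  qed (simp add: carriers induced_aut_in_auto)
  show "bij_betw (induced_aut X) (carrier (BijGroup X)) (carrier (AutoGroup (PIstar_monoid X)))"
    unfolding carriers
  proof (rule bij_betw_imageI)
    show "induced_aut X ` Bij X = auto (PIstar_monoid X)"
    proof (intro equalityI subsetI)
      fix \<phi> assume "\<phi> \<in> auto (PIstar_monoid X)"
      then obtain \<sigma> where "\<sigma> \<in> Bij X" "\<phi> = induced_aut X \<sigma>"
        by (rule auto_eq_induced_aut)
      then show "\<phi> \<in> induced_aut X ` Bij X" by blast
    qed (auto intro: induced_aut_in_auto)
  qed (rule inj_on_induced_aut)
qed

theorem mainTheorem16:
  fixes X :: "'a set"
  shows "AutoGroup (PIstar_monoid X) \<cong> BijGroup X"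
  using group.iso_sym[OF group_BijGroup is_isoI[OF induced_aut_iso]] .

end
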